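(* Let $d\geqslant 1$. (1) The subset $\mathbb{N}^d$ has complements in $\mathbb{Z}^d$. (2) $\mathbb{N}^d$ has no minimal complement in $\mathbb{Z}^d$. (3) No complement of $\mathbb{N}^d$ in $\mathbb{Z}^d$ contains a minimal complement of $\mathbb{N}^d$.
   Context: $\mathbb{N}=\{0,1,2,\dots\}$. A nonempty set $M\subseteq\mathbb{Z}^d$ is a complement of $W\subseteq \mathbb{Z}^d$ if $W+M=\mathbb{Z}^d$; it is a minimal complement if no proper subset of $M$ is a complement of $W$. *)

theory Defs
  imports "HOL-Analysis.Analysis"
begin

text \<open>Z^d is modelled as the type int ^ 'd with 'd a finite (nonempty) index type.\<close>

definition sumset :: "('a::plus) set \<Rightarrow> 'a set \<Rightarrow> 'a set" where
  "sumset W M = {w + m | w m. w \<in> W \<and> m \<in> M}"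

definition is_complement :: "('a::plus) set \<Rightarrow> 'a set \<Rightarrow> bool" where
  "is_complement M W \<longleftrightarrow> M \<noteq> {} \<and> sumset W M = UNIV"

definition is_minimal_complement :: "('a::plus) set \<Rightarrow> 'a set \<Rightarrow> bool" where
  "is_minimal_complement M W \<longleftrightarrow> is_complement M W \<and>
     (\<forall>M'. M' \<subset> M \<longrightarrow> \<not> is_complement M' W)"

definition natpts :: "(int ^ 'd) set" where
  "natpts = {x. \<forall>i. x $ i \<ge> 0}"

end

theory Submission
  imports Defs
begin

text \<open>If \<open>W\<close> is closed under addition, then \<open>m' + W \<subseteq> m + W\<close> whenever \<open>m' - m \<in> W\<close>, so \<open>m'\<close>
  is redundant in \<open>M\<close>. For \<open>W = \<nat>\<^sup>d\<close> every \<open>m \<in> M\<close> is redundant in this way: \<open>M\<close> must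
  cover the point \<open>m - (1,\<dots>,1)\<close>, which forces an element of \<open>M\<close> strictly below \<open>m\<close>.
  Hence no complement of \<open>\<nat>\<^sup>d\<close> is minimal, while \<open>\<int>\<^sup>d\<close> itself is a complement.\<close>

lemma mem_sumset_iff:
  fixes W M :: "'a::ab_group_add set"
  shows "x \<in> sumset W M \<longleftrightarrow> (\<exists>m\<in>M. x - m \<in> W)"
proof
  assume "x \<in> sumset W M"
  then show "\<exists>m\<in>M. x - m \<in> W"
    unfolding sumset_def by force
next
  assume "\<exists>m\<in>M. x - m \<in> W"
  then obtain m where "m \<in> M" "x - m \<in> W" by blast
  moreover have "x = (x - m) + m" by simp
  ultimately show "x \<in> sumset W M"
    unfolding sumset_def by blast
qed

lemma is_complement_iff:
  fixes W M :: "'a::ab_group_add set"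
  shows "is_complement M W \<longleftrightarrow> (\<forall>x. \<exists>m\<in>M. x - m \<in> W)"
proof
  assume "is_complement M W"
  then show "\<forall>x. \<exists>m\<in>M. x - m \<in> W"
    unfolding is_complement_def by (metis UNIV_I mem_sumset_iff)
next
  assume covers: "\<forall>x. \<exists>m\<in>M. x - m \<in> W"
  then have "M \<noteq> {}" by blast
  moreover have "sumset W M = UNIV"
    using covers by (auto simp: mem_sumset_iff)
  ultimately show "is_complement M W"
    by (simp add: is_complement_def)
qed

lemma is_complement_UNIV:
  fixes W :: "'a::ab_group_add set"
  assumes "W \<noteq> {}"
  shows "is_complement UNIV W"
proof -
  obtain w where "w \<in> W" using assms by blast
  have "x - (x - w) \<in> W" for x using \<open>w \<in> W\<close> by simp
  then show ?thesis by (blast intro: is_complement_iff[THEN iffD2])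
qed

lemma is_complement_Diff_singleton:
  fixes W M :: "'a::ab_group_add set"
  assumes compl: "is_complement M W"
    and add_closed: "\<And>u v. u \<in> W \<Longrightarrow> v \<in> W \<Longrightarrow> u + v \<in> W"
    and "e \<in> W" "- e \<notin> W"
  shows "is_complement (M - {m\<^sub>0}) W"
proof -
  obtain m\<^sub>1 where "m\<^sub>1 \<in> M" and m\<^sub>1: "(m\<^sub>0 - e) - m\<^sub>1 \<in> W"
    using compl by (auto simp: is_complement_iff)
  have below: "m\<^sub>0 - m\<^sub>1 \<in> W"
    using add_closed[OF m\<^sub>1 \<open>e \<in> W\<close>] by (simp add: algebra_simps)
  have "m\<^sub>1 \<noteq> m\<^sub>0"
    using m\<^sub>1 \<open>- e \<notin> W\<close> by auto
  have "\<exists>m\<in>M - {m\<^sub>0}. x - m \<in> W" for x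
  proof -
    obtain m where "m \<in> M" and m: "x - m \<in> W"
      using compl by (auto simp: is_complement_iff)
    show ?thesis
    proof (cases "m = m\<^sub>0")
      case True
      have "x - m\<^sub>1 = (x - m\<^sub>0) + (m\<^sub>0 - m\<^sub>1)" by simp
      then have "x - m\<^sub>1 \<in> W"
        using add_closed[OF _ below] m True by metis
      then show ?thesis
        using \<open>m\<^sub>1 \<in> M\<close> \<open>m\<^sub>1 \<noteq> m\<^sub>0\<close> by blast
    next
      case False
      then show ?thesis using \<open>m \<in> M\<close> m by blast
    qed
  qed
  then show ?thesis by (simp add: is_complement_iff)
qed

lemma not_is_minimal_complement:
  fixes W M :: "'a::ab_group_add set"
  assumes "\<And>u v. u \<in> W \<Longrightarrow> v \<in> W \<Longrightarrow> u + v \<in> W"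
    and "e \<in> W" "- e \<notin> W"
  shows "\<not> is_minimal_complement M W"
proof
  assume minimal: "is_minimal_complement M W"
  then have "is_complement M W"
    by (simp add: is_minimal_complement_def)
  then obtain m\<^sub>0 where "m\<^sub>0 \<in> M"
    by (auto simp: is_complement_def)
  then have "M - {m\<^sub>0} \<subset> M" by blast
  moreover have "is_complement (M - {m\<^sub>0}) W"
    using is_complement_Diff_singleton[OF \<open>is_complement M W\<close> assms] .
  ultimately show False
    using minimal by (auto simp: is_minimal_complement_def)
qed

lemma natpts_add_closed: "u \<in> natpts \<Longrightarrow> v \<in> natpts \<Longrightarrow> u + v \<in> natpts"
  by (simp add: natpts_def)

lemma one_mem_natpts: "1 \<in> natpts"
  by (simp add: natpts_def)

lemma uminus_one_notin_natpts: "- 1 \<notin> natpts"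
  by (simp add: natpts_def)

theorem corollary3p2:
  shows "(\<exists>M :: (int ^ 'd) set. is_complement M natpts)
       \<and> (\<nexists>M :: (int ^ 'd) set. is_minimal_complement M natpts)
       \<and> (\<forall>C :: (int ^ 'd) set. is_complement C natpts \<longrightarrow>
            \<not> (\<exists>M \<subseteq> C. is_minimal_complement M natpts))"
proof -
  have "is_complement (UNIV :: (int ^ 'd) set) natpts"
    using one_mem_natpts by (intro is_complement_UNIV) blast
  moreover have "\<not> is_minimal_complement M natpts" for M :: "(int ^ 'd) set"
    using natpts_add_closed one_mem_natpts uminus_one_notin_natpts
    by (rule not_is_minimal_complement)
  ultimately show ?thesis by blast
qed

end
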